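(* Let $K$ be an infinite field of characteristic $p>0$, let $\lambda=(\lambda_1,\dots,\lambda_n)$ and $\mu=(\mu_1,\dots,\mu_n)$ be partitions of $r$ with $\mu_2\le\lambda_1$, let $k,d$ be positive integers, and let $\mu^+=(\mu_1+kp^d,\mu_2,\dots,\mu_n)$. Let $U\in A$ and write $[U]=\sum_{T\in\mathrm{Std}(\mu)}c_T[T]$ in $\Delta(\mu)$ with $c_T\in K$. Then $[U^+]=\sum_{T\in\mathrm{Std}(\mu)}c_T[T^+]$ in $\Delta(\mu^+)$; i.e. writing $[U^+]=\sum_{T\in\mathrm{Std}(\mu)}c_{T^+}[T^+]$, one has $c_T=c_{T^+}$ for all $T\in\mathrm{Std}(\mu)$.
   Context: $V=K^n$ with basis $e_1<\dots<e_n$, written $1,\dots,n$; $D(\nu)=D_{\nu_1}V\otimes\cdots\otimes D_{\nu_n}V$ (divided powers), $i^{(a)}$ the $a$-th divided power of $e_i$. $\Delta(\nu)$ is the Weyl module of the Schur algebra $S_K(n,|\nu|)$, with the Akin–Buchsbaum–Weyman surjection $d'_\nu:D(\nu)\to\Delta(\nu)$. A tableau of shape $\nu$ is a filling of the Young diagram of $\nu$ by entries in $\{1,\dots,n\}$; it is standard if rows weakly increase and columns strictly increase; $\mathrm{Std}(\nu)$ is the set of standard tableaux of shape $\nu$. For a tableau $T$, $x_T=x_T(1)\otimes\cdots\otimes x_T(n)\in D(\nu)$ where $x_T(i)=1^{(a_{i1})}\cdots n^{(a_{in})}$ with $a_{ij}$ the number of $j$'s in row $i$, and $[T]=d'_\nu(x_T)$;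 the $[T]$, $T\in\mathrm{Std}(\nu)$, form a basis of $\Delta(\nu)$. For a tableau $T$ of shape $\mu$, $T^+$ is the tableau of shape $\mu^+$ obtained by inserting $kp^d$ entries $1$ at the start of the top row. $A$ is the set of tableaux of shape $\mu$ whose row $i$ (for each $i$) contains only entries $\ge i$ and whose first row contains exactly $\lambda_1+t$ entries equal to $1$ for some $0\le t\le\lambda_2$ (rows written as $i^{(a_{ii})}(i+1)^{(a_{i,i+1})}\cdots n^{(a_{in})}$, the first row as $1^{(\lambda_1+t)}2^{(a_{12})}\cdots n^{(a_{1n})}$). *)

theory Defs
  imports Main "HOL-Library.Multiset"
begin

(* Shapes nu : nat => nat (row i has nu i boxes, rows 1..n);
   tableaux T : nat => nat => nat, T i j = entry in row i, column j (1-indexed),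
   entries in {1..n} inside the diagram and 0 outside. *)

definition is_partition :: "nat \<Rightarrow> nat \<Rightarrow> (nat \<Rightarrow> nat) \<Rightarrow> bool" where
  "is_partition n r lam \<longleftrightarrow> lam 0 = 0 \<and> (\<forall>i>n. lam i = 0) \<and>
     (\<forall>i. 1 \<le> i \<longrightarrow> lam (Suc i) \<le> lam i) \<and> (\<Sum>i=1..n. lam i) = r"

definition in_diag :: "nat \<Rightarrow> (nat \<Rightarrow> nat) \<Rightarrow> nat \<Rightarrow> nat \<Rightarrow> bool" where
  "in_diag n nu i j \<longleftrightarrow> 1 \<le> i \<and> i \<le> n \<and> 1 \<le> j \<and> j \<le> nu i"

definition tableau :: "nat \<Rightarrow> (nat \<Rightarrow> nat) \<Rightarrow> (nat \<Rightarrow> nat \<Rightarrow> nat) \<Rightarrow> bool" where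
  "tableau n nu T \<longleftrightarrow> (\<forall>i j. if in_diag n nu i j then T i j \<in> {1..n} else T i j = 0)"

definition col_strict :: "nat \<Rightarrow> (nat \<Rightarrow> nat) \<Rightarrow> (nat \<Rightarrow> nat \<Rightarrow> nat) \<Rightarrow> bool" where
  "col_strict n nu T \<longleftrightarrow> (\<forall>i i' j. in_diag n nu i j \<and> in_diag n nu i' j \<and> i < i' \<longrightarrow> T i j < T i' j)"

definition row_weak :: "nat \<Rightarrow> (nat \<Rightarrow> nat) \<Rightarrow> (nat \<Rightarrow> nat \<Rightarrow> nat) \<Rightarrow> bool" where
  "row_weak n nu T \<longleftrightarrow> (\<forall>i j j'. in_diag n nu i j \<and> in_diag n nu i j' \<and> j \<le> j' \<longrightarrow> T i j \<le> T i j')"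

definition Std :: "nat \<Rightarrow> (nat \<Rightarrow> nat) \<Rightarrow> (nat \<Rightarrow> nat \<Rightarrow> nat) set" where
  "Std n nu = {T. tableau n nu T \<and> row_weak n nu T \<and> col_strict n nu T}"

text \<open>Content of row i (the divided power monomial x_T(i), recorded as a multiset).\<close>
definition row_mset :: "(nat \<Rightarrow> nat) \<Rightarrow> (nat \<Rightarrow> nat \<Rightarrow> nat) \<Rightarrow> nat \<Rightarrow> nat multiset" where
  "row_mset nu T i = mset (map (T i) [1..<Suc (nu i)])"

definition col_distinct :: "nat \<Rightarrow> (nat \<Rightarrow> nat) \<Rightarrow> (nat \<Rightarrow> nat \<Rightarrow> nat) \<Rightarrow> bool" where
  "col_distinct n nu W \<longleftrightarrow> (\<forall>i i' j. in_diag n nu i j \<and> in_diag n nu i' j \<and> i \<noteq> i' \<longrightarrow> W i j \<noteq> W i' j)"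

definition col_set :: "nat \<Rightarrow> (nat \<Rightarrow> nat) \<Rightarrow> (nat \<Rightarrow> nat \<Rightarrow> nat) \<Rightarrow> nat \<Rightarrow> nat set" where
  "col_set n nu W j = {W i j | i. in_diag n nu i j}"

definition col_inv :: "nat \<Rightarrow> (nat \<Rightarrow> nat) \<Rightarrow> (nat \<Rightarrow> nat \<Rightarrow> nat) \<Rightarrow> nat" where
  "col_inv n nu W = card {(i, i', j). in_diag n nu i j \<and> in_diag n nu i' j \<and> i < i' \<and> W i' j < W i j}"

text \<open>[T] = d'_nu(x_T), the Akin-Buchsbaum-Weyman map: diagonalize each divided power
  x_T(i) into the sum of all distinct words with that content (placed in row i), then
  multiply the columns in the exterior powers.  The result lives in
  Lambda^{nu'_1} V (x) ... (x) Lambda^{nu'_m} V, whose standard basis is indexed by the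
  column-strict fillings F of the diagram; an element is recorded as its coordinate
  function F |-> coefficient (0 off column-strict fillings).\<close>
definition weyl_vec :: "nat \<Rightarrow> (nat \<Rightarrow> nat) \<Rightarrow> (nat \<Rightarrow> nat \<Rightarrow> nat) \<Rightarrow> (nat \<Rightarrow> nat \<Rightarrow> nat) \<Rightarrow> 'a::comm_ring_1" where
  "weyl_vec n nu T = (\<lambda>F. if tableau n nu F \<and> col_strict n nu F then
      (\<Sum>W\<in>{W. tableau n nu W \<and> (\<forall>i\<in>{1..n}. row_mset nu W i = row_mset nu T i)
               \<and> col_distinct n nu W \<and> (\<forall>j. col_set n nu W j = col_set n nu F j)}.
         (- 1) ^ col_inv n nu W)
     else 0)"

definition shape_plus :: "nat \<Rightarrow> (nat \<Rightarrow> nat) \<Rightarrow> (nat \<Rightarrow> nat)" where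
  "shape_plus m nu = nu(1 := nu 1 + m)"

definition tplus :: "nat \<Rightarrow> (nat \<Rightarrow> nat \<Rightarrow> nat) \<Rightarrow> (nat \<Rightarrow> nat \<Rightarrow> nat)" where
  "tplus m T = (\<lambda>i j. if i = 1 then (if 1 \<le> j \<and> j \<le> m then 1 else T 1 (j - m)) else T i j)"

definition setA :: "nat \<Rightarrow> (nat \<Rightarrow> nat) \<Rightarrow> (nat \<Rightarrow> nat) \<Rightarrow> (nat \<Rightarrow> nat \<Rightarrow> nat) set" where
  "setA n lam mu = {U. tableau n mu U \<and> (\<forall>i j. in_diag n mu i j \<longrightarrow> i \<le> U i j) \<and>
     (\<exists>t \<le> lam 2. card {j. in_diag n mu 1 j \<and> U 1 j = 1} = lam 1 + t)}"

end

theory Submission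
  imports Defs "HOL-Library.List_Lexorder"
begin

text \<open>Fix a column-strict filling F of shape mu+. Entries of its first row beyond
  column mu 2 are alone in their columns, so every word contributing to [X+] at F agrees
  with F there. If this part of F contains at least m entries 1, deleting m of them yields a
  filling F' of shape mu with [X+](F) = [X](F') for every X, through a sign-preserving
  bijection of the contributing words. Otherwise [X+](F) = 0 as soon as X has at least
  mu 2 entries 1 in its first row. U has lam 1 \<ge> mu 2 of them, and c T = 0 for standard T with
  fewer: the number of 1s in the first row grades \<Delta>(mu), and the [T] are unitriangular,
  hence linearly independent.\<close>

declare upt_Suc[simp del]

lemma is_partition_antimono:
  assumes "is_partition n r mu" "1 \<le> i" "i \<le> j"
  shows "mu j \<le> mu i"
  using assms(3)
proof (induction j rule: dec_induct)
  case (step j)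
  then have "mu (Suc j) \<le> mu j" using assms(1,2) unfolding is_partition_def by auto
  with step show ?case by simp
qed simp

lemma tableau_in_range: "tableau n nu T \<Longrightarrow> in_diag n nu i j \<Longrightarrow> T i j \<in> {1..n}"
  unfolding tableau_def by metis

lemma tableau_outside: "tableau n nu T \<Longrightarrow> \<not> in_diag n nu i j \<Longrightarrow> T i j = 0"
  unfolding tableau_def by metis

lemma tableau_eqI:
  assumes "tableau n nu A" "tableau n nu B" "\<And>i j. in_diag n nu i j \<Longrightarrow> A i j = B i j"
  shows "A = B"
proof (intro ext)
  fix i j show "A i j = B i j"
    using assms tableau_outside[OF assms(1)] tableau_outside[OF assms(2)]
    by (cases "in_diag n nu i j") auto
qed

lemma finite_Std: "finite (Std n nu)"
proof -
  define D where "D = {1..n} \<times> {0..Max (nu ` {1..n})}"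
  define G where "G = {f :: nat \<times> nat \<Rightarrow> nat. \<forall>x. (x \<in> D \<longrightarrow> f x \<in> {0..n}) \<and> (x \<notin> D \<longrightarrow> f x = 0)}"
  have "finite G" unfolding G_def D_def by (rule finite_set_of_finite_funs) auto
  moreover have "case_prod T \<in> G" if "tableau n nu T" for T
  proof -
    have "(i, j) \<in> D" if "in_diag n nu i j" for i j
    proof -
      have i: "i \<in> {1..n}" and j: "j \<le> nu i" using that unfolding in_diag_def by auto
      have "nu i \<le> Max (nu ` {1..n})" using i by (intro Max_ge) auto
      with j have "j \<le> Max (nu ` {1..n})" by (rule le_trans)
      with i show ?thesis unfolding D_def by simp
    qed
    then have "T i j \<in> {0..n} \<and> ((i, j) \<notin> D \<longrightarrow> T i j = 0)" for i j
      using tableau_in_range[OF that] tableau_outside[OF that] by (cases "in_diag n nu i j") auto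
    then show ?thesis unfolding G_def by auto
  qed
  then have "Std n nu \<subseteq> curry ` G"
    unfolding Std_def by (auto intro!: image_eqI[where x="case_prod _"])
  ultimately show ?thesis using finite_subset by blast
qed

lemma count_row_mset: "count (row_mset nu X i) v = card {j \<in> {1..nu i}. X i j = v}"
proof -
  have "count (mset (map f [1..<Suc x])) v = card {j \<in> {1..x}. f j = v}" for f :: "nat \<Rightarrow> nat" and x
  proof (induction x)
    case (Suc x)
    have "{j \<in> {1..Suc x}. f j = v} = {j \<in> {1..x}. f j = v} \<union> (if f (Suc x) = v then {Suc x} else {})"
      by (auto simp: le_Suc_eq)
    with Suc show ?case by (simp add: upt_Suc card_insert_if)
  qed simp
  then show ?thesis unfolding row_mset_def .
qed

lemma mem_row_mset_iff: "v \<in># row_mset nu X i \<longleftrightarrow> (\<exists>j\<in>{1..nu i}. X i j = v)"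
  unfolding row_mset_def by (auto simp: atLeastLessThanSuc_atLeastAtMost)

lemma sum_row_mset: "sum_mset (row_mset nu X i) = (\<Sum>j=1..nu i. X i j)"
  unfolding row_mset_def sum_mset_sum_list sum_set_upt_conv_sum_list_nat[symmetric]
  by (simp add: atLeastLessThanSuc_atLeastAtMost)

lemma row_mset_split:
  assumes "a \<le> nu i"
  shows "row_mset nu W i = mset (map (W i) [1..<Suc a]) + mset (map (W i) [Suc a..<Suc (nu i)])"
proof -
  have "[1..<Suc (nu i)] = [1..<Suc a] @ [Suc a..<Suc (nu i)]"
    using upt_add_eq_append[of 1 "Suc a" "nu i - a"] assms by simp
  then show ?thesis unfolding row_mset_def by simp
qed

lemma row_mset_cong:
  "(\<And>j. 1 \<le> j \<Longrightarrow> j \<le> nu i \<Longrightarrow> X i j = Y i j) \<Longrightarrow> row_mset nu X i = row_mset nu Y i"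
  unfolding row_mset_def by (intro arg_cong[where f=mset] map_cong) auto

lemma col_set_cong:
  "(\<And>i. in_diag n nu i j \<Longrightarrow> X i j = Y i j) \<Longrightarrow> col_set n nu X j = col_set n nu Y j"
  unfolding col_set_def by force

lemma row_mset_tplus_first:
  "row_mset (shape_plus m nu) (tplus m X) 1 = replicate_mset m 1 + row_mset nu X 1"
proof -
  have "[1..<Suc (m + nu 1)] = [1..<Suc m] @ [Suc m..<Suc m + nu 1]"
    using upt_add_eq_append[of 1 "Suc m" "nu 1"] by simp
  moreover have "map (tplus m X 1) [1..<Suc m] = replicate m 1"
    by (rule map_upt_eqI) (auto simp: tplus_def)
  moreover have "map (tplus m X 1) [Suc m..<Suc m + nu 1] = map (X 1) [1..<Suc (nu 1)]"
    by (rule map_upt_eqI) (auto simp: tplus_def nth_upt)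
  moreover have "shape_plus m nu 1 = m + nu 1" unfolding shape_plus_def by simp
  ultimately show ?thesis unfolding row_mset_def by (simp del: mset_map)
qed

lemma row_mset_tplus_other:
  "i \<noteq> 1 \<Longrightarrow> row_mset (shape_plus m nu) (tplus m X) i = row_mset nu X i"
  unfolding row_mset_def shape_plus_def tplus_def by simp

section \<open>Unitriangularity of the standard basis\<close>

definition weyl_words ::
  "nat \<Rightarrow> (nat \<Rightarrow> nat) \<Rightarrow> (nat \<Rightarrow> nat \<Rightarrow> nat) \<Rightarrow> (nat \<Rightarrow> nat \<Rightarrow> nat) \<Rightarrow> (nat \<Rightarrow> nat \<Rightarrow> nat) set"
where
  "weyl_words n nu T F = {W. tableau n nu W \<and> (\<forall>i\<in>{1..n}. row_mset nu W i = row_mset nu T i)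
     \<and> col_distinct n nu W \<and> (\<forall>j. col_set n nu W j = col_set n nu F j)}"

lemma weyl_vec_eq_sum:
  "weyl_vec n nu T F = (if tableau n nu F \<and> col_strict n nu F
     then \<Sum>W\<in>weyl_words n nu T F. (- 1) ^ col_inv n nu W else 0)"
  unfolding weyl_vec_def weyl_words_def by simp

lemma weyl_vec_nonzeroE:
  assumes "weyl_vec n nu T F \<noteq> 0"
  obtains W where "W \<in> weyl_words n nu T F" "tableau n nu F" "col_strict n nu F"
  using assms unfolding weyl_vec_eq_sum
  by (cases "weyl_words n nu T F = {}") (auto split: if_splits)

definition row_sums :: "nat \<Rightarrow> (nat \<Rightarrow> nat) \<Rightarrow> (nat \<Rightarrow> nat \<Rightarrow> nat) \<Rightarrow> nat list" where
  "row_sums n nu X = map (\<lambda>i. \<Sum>j=1..nu i. X i j) [1..<Suc n]"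

lemma row_sums_weyl_word:
  assumes "W \<in> weyl_words n nu T F"
  shows "row_sums n nu W = row_sums n nu T"
proof -
  have "(\<Sum>j=1..nu i. W i j) = (\<Sum>j=1..nu i. T i j)" if "i \<in> {1..n}" for i
  proof -
    have "row_mset nu W i = row_mset nu T i" using assms that unfolding weyl_words_def by blast
    then show ?thesis by (simp only: sum_row_mset[symmetric])
  qed
  then show ?thesis unfolding row_sums_def
    by (intro map_cong) (simp_all add: atLeastLessThanSuc_atLeastAtMost)
qed

lemma map_upt_less_lex:
  fixes f g :: "nat \<Rightarrow> 'a :: linorder"
  assumes "i0 \<in> {1..n}" "\<And>i. 1 \<le> i \<Longrightarrow> i < i0 \<Longrightarrow> f i = g i" "f i0 < g i0"
  shows "map f [1..<Suc n] < map g [1..<Suc n]"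
  unfolding list_less_def lexord_take_index_conv
proof (intro disjI2 exI[of _ "i0 - 1"] conjI)
  have "take (i0 - 1) [1..<Suc n] = [1..<i0]" using assms(1) by (simp add: take_upt)
  then show "take (i0 - 1) (map f [1..<Suc n]) = take (i0 - 1) (map g [1..<Suc n])"
    using assms(2) by (simp add: take_map)
  have "i0 - 1 < n" "1 + (i0 - 1) = i0" using assms(1) by auto
  then show "(map f [1..<Suc n] ! (i0 - 1), map g [1..<Suc n] ! (i0 - 1)) \<in> {(u, v). u < v}"
    using assms(3) by (simp add: nth_upt)
qed (use assms(1) in auto)

lemma Std_eq_if_row_mset_eq:
  assumes T: "T \<in> Std n nu" and F: "F \<in> Std n nu"
    and rows: "\<forall>i\<in>{1..n}. row_mset nu T i = row_mset nu F i"
  shows "T = F"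
proof (rule tableau_eqI)
  show "tableau n nu T" "tableau n nu F" using T F unfolding Std_def by auto
  fix i j assume d: "in_diag n nu i j"
  then have i: "i \<in> {1..n}" unfolding in_diag_def by auto
  have sorted_row: "sorted (map (X i) [1..<Suc (nu i)])" if "X \<in> Std n nu" for X
    using that i unfolding sorted_iff_nth_mono Std_def row_weak_def in_diag_def
    by (auto simp: nth_upt)
  have "map (T i) [1..<Suc (nu i)] = map (F i) [1..<Suc (nu i)]"
    using rows i sorted_row[OF T] sorted_row[OF F] unfolding row_mset_def
    by (metis properties_for_sort)
  then show "T i j = F i j" using d unfolding in_diag_def by auto
qed

lemma weyl_word_ge_first_diff_row:
  assumes cF: "col_strict n nu F" and W: "W \<in> weyl_words n nu T F"
    and above: "\<And>i j. i < i0 \<Longrightarrow> in_diag n nu i j \<Longrightarrow> W i j = F i j"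
    and d: "in_diag n nu i0 j"
  shows "F i0 j \<le> W i0 j"
proof -
  have "W i0 j \<in> col_set n nu W j" using d unfolding col_set_def by auto
  then have "W i0 j \<in> col_set n nu F j" using W unfolding weyl_words_def by simp
  then obtain i where i: "in_diag n nu i j" "W i0 j = F i j" unfolding col_set_def by auto
  have "\<not> i < i0"
  proof
    assume "i < i0"
    then have "W i j = W i0 j" using above i by simp
    moreover have "i \<noteq> i0" using \<open>i < i0\<close> by simp
    ultimately show False using W d i(1) unfolding weyl_words_def col_distinct_def by auto
  qed
  then have "i = i0 \<or> i0 < i" by linarith
  then show ?thesis using cF d i unfolding col_strict_def by (auto intro: less_imp_le)
qed

lemma weyl_word_row_sums_less:
  assumes tF: "tableau n nu F" and cF: "col_strict n nu F"
    and W: "W \<in> weyl_words n nu T F" and "W \<noteq> F"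
  shows "row_sums n nu F < row_sums n nu T"
proof -
  define differs where "differs i \<longleftrightarrow> (\<exists>j. in_diag n nu i j \<and> W i j \<noteq> F i j)" for i
  have "\<exists>i. differs i"
    using \<open>W \<noteq> F\<close> tableau_eqI[OF _ tF] W unfolding differs_def weyl_words_def by blast
  define i0 where "i0 = (LEAST i. differs i)"
  obtain j0 where j0: "in_diag n nu i0 j0" "W i0 j0 \<noteq> F i0 j0"
    using LeastI_ex[OF \<open>\<exists>i. differs i\<close>] unfolding i0_def differs_def by blast
  have above: "\<And>i j. i < i0 \<Longrightarrow> in_diag n nu i j \<Longrightarrow> W i j = F i j"
    using not_less_Least unfolding i0_def differs_def by blast
  have ge: "F i0 j \<le> W i0 j" if "in_diag n nu i0 j" for j
    by (rule weyl_word_ge_first_diff_row[OF cF W]) (use above that in auto)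
  have i0: "i0 \<in> {1..n}" using j0 unfolding in_diag_def by auto
  have "(\<Sum>j=1..nu i0. F i0 j) < (\<Sum>j=1..nu i0. W i0 j)"
  proof (rule sum_strict_mono_ex1)
    show "\<forall>j\<in>{1..nu i0}. F i0 j \<le> W i0 j" using i0 ge unfolding in_diag_def by auto
    show "\<exists>j\<in>{1..nu i0}. F i0 j < W i0 j"
      using j0 ge[OF j0(1)] unfolding in_diag_def by (auto intro: bexI[of _ j0])
  qed simp
  moreover have "(\<Sum>j=1..nu i. F i j) = (\<Sum>j=1..nu i. W i j)" if "1 \<le> i" "i < i0" for i
    using above[of i] that i0 unfolding in_diag_def by (intro sum.cong) auto
  ultimately have "row_sums n nu F < row_sums n nu W"
    unfolding row_sums_def by (rule map_upt_less_lex[OF i0, rotated])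
  then show ?thesis using row_sums_weyl_word[OF W] by simp
qed

lemma weyl_words_Std_self:
  assumes T: "T \<in> Std n nu"
  shows "weyl_words n nu T T = {T}"
proof
  have "col_strict n nu T" using T unfolding Std_def by simp
  then have "col_distinct n nu T" unfolding col_distinct_def col_strict_def
    by (metis less_irrefl nat_neq_iff)
  then show "{T} \<subseteq> weyl_words n nu T T" using T unfolding Std_def weyl_words_def by auto
  show "weyl_words n nu T T \<subseteq> {T}"
  proof
    fix W assume W: "W \<in> weyl_words n nu T T"
    show "W \<in> {T}"
    proof (rule ccontr)
      assume "W \<notin> {T}"
      then have "row_sums n nu T < row_sums n nu T"
        using weyl_word_row_sums_less[OF _ _ W] T unfolding Std_def by simp
      then show False by simp
    qed
  qed
qed

lemma weyl_vec_Std_self: "T \<in> Std n nu \<Longrightarrow> weyl_vec n nu T T = 1"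
proof -
  assume T: "T \<in> Std n nu"
  then have "{(i, i', j). in_diag n nu i j \<and> in_diag n nu i' j \<and> i < i' \<and> T i' j < T i j} = {}"
    unfolding Std_def col_strict_def by (auto dest: less_not_sym)
  then have "col_inv n nu T = 0" unfolding col_inv_def by (metis card.empty)
  then show ?thesis using T weyl_words_Std_self[OF T] unfolding weyl_vec_eq_sum Std_def by simp
qed

lemma weyl_vec_Std_triangular:
  assumes "T \<in> Std n nu" "F \<in> Std n nu" "weyl_vec n nu T F \<noteq> 0"
  shows "F = T \<or> row_sums n nu F < row_sums n nu T"
proof -
  obtain W where W: "W \<in> weyl_words n nu T F" using weyl_vec_nonzeroE[OF assms(3)] .
  show ?thesis
  proof (cases "W = F")
    case True
    with W have "\<forall>i\<in>{1..n}. row_mset nu T i = row_mset nu F i" unfolding weyl_words_def by simp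
    then show ?thesis using Std_eq_if_row_mset_eq[OF assms(1,2)] by simp
  qed (use W assms(2) weyl_word_row_sums_less in \<open>auto simp: Std_def\<close>)
qed

text \<open>Unitriangularity with respect to the lexicographic order of the row sums: evaluate
  at the member of the support whose row sums are maximal.\<close>
lemma weyl_vec_Std_linear_independent:
  fixes e :: "_ \<Rightarrow> 'a :: comm_ring_1"
  assumes "finite S" "S \<subseteq> Std n nu" and zero: "\<And>F. (\<Sum>T\<in>S. e T * weyl_vec n nu T F) = 0"
  shows "\<forall>T\<in>S. e T = 0"
proof (rule ccontr)
  define S' where "S' = {T\<in>S. e T \<noteq> 0}"
  assume "\<not> (\<forall>T\<in>S. e T = 0)"
  then have "S' \<noteq> {}" "finite S'" using assms(1) unfolding S'_def by auto
  then have "Max (row_sums n nu ` S') \<in> row_sums n nu ` S'" by (intro Max_in) auto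
  then obtain T0 where T0: "T0 \<in> S'" "Max (row_sums n nu ` S') = row_sums n nu T0" by auto
  have maximal: "row_sums n nu T \<le> row_sums n nu T0" if "T \<in> S'" for T
    using T0(2) \<open>finite S'\<close> that by (metis Max_ge finite_imageI imageI)
  have T0S: "T0 \<in> S" "T0 \<in> Std n nu" "e T0 \<noteq> 0" using T0 assms(2) unfolding S'_def by auto
  have "e T * weyl_vec n nu T T0 = 0" if "T \<in> S - {T0}" for T
  proof (rule ccontr)
    assume nonzero: "e T * weyl_vec n nu T T0 \<noteq> 0"
    then have "T \<in> S'" using that unfolding S'_def by fastforce
    moreover have "(weyl_vec n nu T T0 :: 'a) \<noteq> 0" using nonzero by (metis mult_zero_right)
    ultimately show False
      using weyl_vec_Std_triangular[of T n nu T0] maximal that T0S assms(2) by fastforce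
  qed
  then have "(\<Sum>T\<in>S. e T * weyl_vec n nu T T0) = e T0 * weyl_vec n nu T0 T0"
    using assms(1) T0S(1) by (simp add: sum.remove)
  also have "\<dots> = e T0" using weyl_vec_Std_self[OF T0S(2), where 'a='a] by simp
  finally show False using zero T0S by simp
qed

section \<open>Grading by the number of 1s in the first row\<close>

definition no_ones_below_first_row :: "nat \<Rightarrow> (nat \<Rightarrow> nat) \<Rightarrow> (nat \<Rightarrow> nat \<Rightarrow> nat) \<Rightarrow> bool" where
  "no_ones_below_first_row n nu X \<longleftrightarrow> (\<forall>i j. in_diag n nu i j \<longrightarrow> 2 \<le> i \<longrightarrow> X i j \<noteq> 1)"

lemma no_ones_below_first_row_col_strict:
  assumes "tableau n nu F" "col_strict n nu F" "\<And>i. 1 \<le> i \<Longrightarrow> nu i \<le> nu 1"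
  shows "no_ones_below_first_row n nu F"
  unfolding no_ones_below_first_row_def
proof (intro allI impI)
  fix i j assume d: "in_diag n nu i j" and "2 \<le> i"
  then have d1: "in_diag n nu 1 j" using assms(3)[of i] unfolding in_diag_def by auto
  then have "1 \<le> F 1 j" using tableau_in_range[OF assms(1)] by fastforce
  also have "F 1 j < F i j" using assms(2) d d1 \<open>2 \<le> i\<close> unfolding col_strict_def by simp
  finally show "F i j \<noteq> 1" by simp
qed

lemma no_ones_below_first_row_weyl_word:
  assumes "no_ones_below_first_row n nu X" "W \<in> weyl_words n nu X F"
  shows "no_ones_below_first_row n nu W"
  unfolding no_ones_below_first_row_def
proof (intro allI impI notI)
  fix i j assume d: "in_diag n nu i j" and "2 \<le> i" and "W i j = 1"
  then have "1 \<in># row_mset nu W i" unfolding mem_row_mset_iff in_diag_def by auto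
  then have "1 \<in># row_mset nu X i" using assms(2) d unfolding weyl_words_def in_diag_def by auto
  then show False using assms(1) \<open>2 \<le> i\<close> d
    unfolding mem_row_mset_iff no_ones_below_first_row_def in_diag_def by fastforce
qed

lemma first_row_one_iff_col_set:
  assumes "no_ones_below_first_row n nu Y" "in_diag n nu 1 j"
  shows "Y 1 j = 1 \<longleftrightarrow> 1 \<in> col_set n nu Y j"
proof
  assume "1 \<in> col_set n nu Y j"
  then obtain i where "in_diag n nu i j" "Y i j = 1" unfolding col_set_def by auto
  moreover have "1 \<le> i" using \<open>in_diag n nu i j\<close> unfolding in_diag_def by simp
  ultimately show "Y 1 j = 1"
    using assms(1) unfolding no_ones_below_first_row_def by (cases "i = 1") auto
qed (use assms(2) in \<open>force simp: col_set_def\<close>)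

text \<open>Since the entry 1 can only sit in the first row of a column, the number of 1s
  is read off from the column sets.\<close>
lemma count_ones_weyl_word:
  assumes n: "1 \<le> n" and nu: "\<And>i. 1 \<le> i \<Longrightarrow> nu i \<le> nu 1"
    and X: "no_ones_below_first_row n nu X"
    and tF: "tableau n nu F" and cF: "col_strict n nu F" and W: "W \<in> weyl_words n nu X F"
  shows "count (row_mset nu X 1) 1 = count (row_mset nu F 1) 1"
proof -
  have W_ones: "no_ones_below_first_row n nu W" by (rule no_ones_below_first_row_weyl_word[OF X W])
  have F_ones: "no_ones_below_first_row n nu F"
    using tF cF nu by (rule no_ones_below_first_row_col_strict)
  have "W 1 j = 1 \<longleftrightarrow> F 1 j = 1" if "j \<in> {1..nu 1}" for j
  proof -
    have "in_diag n nu 1 j" using n that unfolding in_diag_def by auto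
    then show ?thesis
      using W first_row_one_iff_col_set[OF W_ones] first_row_one_iff_col_set[OF F_ones]
      unfolding weyl_words_def by auto
  qed
  then have "count (row_mset nu W 1) 1 = count (row_mset nu F 1) 1"
    unfolding count_row_mset by (metis (mono_tags, lifting) Collect_cong)
  moreover have "row_mset nu W 1 = row_mset nu X 1" using W n unfolding weyl_words_def by auto
  ultimately show ?thesis by simp
qed

lemma weyl_vec_eq_0_if_count_ones_ne:
  assumes "1 \<le> n" "\<And>i. 1 \<le> i \<Longrightarrow> nu i \<le> nu 1" "no_ones_below_first_row n nu X"
    and "count (row_mset nu X 1) 1 \<noteq> count (row_mset nu F 1) 1"
  shows "weyl_vec n nu X F = 0"
proof (rule ccontr)
  assume "weyl_vec n nu X F \<noteq> 0"
  then obtain W where "W \<in> weyl_words n nu X F" "tableau n nu F" "col_strict n nu F"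
    by (rule weyl_vec_nonzeroE)
  with assms(1-3) have "count (row_mset nu X 1) 1 = count (row_mset nu F 1) 1"
    by (intro count_ones_weyl_word)
  with assms(4) show False by simp
qed

text \<open>The number of 1s in the first row grades the Weyl module, so the part of the
  expansion of U with fewer than b such 1s is itself zero.\<close>
lemma Std_coeff_eq_zero_if_few_ones:
  fixes c :: "_ \<Rightarrow> 'a :: comm_ring_1"
  assumes n: "1 \<le> n" and nu: "\<And>i. 1 \<le> i \<Longrightarrow> nu i \<le> nu 1"
    and U_ones: "b \<le> count (row_mset nu U 1) 1" "no_ones_below_first_row n nu U"
    and expansion: "weyl_vec n nu U = (\<lambda>F. \<Sum>T\<in>Std n nu. c T * weyl_vec n nu T F)"
    and T: "T \<in> Std n nu" "count (row_mset nu T 1) 1 < b"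
  shows "c T = 0"
proof -
  define few where "few = {T\<in>Std n nu. count (row_mset nu T 1) 1 < b}"
  have Std_ones: "no_ones_below_first_row n nu T" if "T \<in> Std n nu" for T
    using that nu unfolding Std_def by (auto intro: no_ones_below_first_row_col_strict)
  have vanish: "c T * weyl_vec n nu T F = 0"
    if "T \<in> Std n nu" "(count (row_mset nu T 1) 1 < b) \<noteq> (count (row_mset nu F 1) 1 < b)" for T F
  proof -
    have "(weyl_vec n nu T F :: 'a) = 0"
      using n nu Std_ones[OF that(1)] by (rule weyl_vec_eq_0_if_count_ones_ne) (use that(2) in auto)
    then show ?thesis by simp
  qed
  have "(\<Sum>T\<in>few. c T * weyl_vec n nu T F) = 0" for F
  proof (cases "b \<le> count (row_mset nu F 1) 1")
    case True
    then show ?thesis using vanish unfolding few_def by simp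
  next
    case False
    then have "count (row_mset nu U 1) 1 \<noteq> count (row_mset nu F 1) 1" using U_ones(1) by linarith
    with n nu U_ones(2) have U_zero: "(weyl_vec n nu U F :: 'a) = 0"
      by (rule weyl_vec_eq_0_if_count_ones_ne)
    have "(\<Sum>T\<in>few. c T * weyl_vec n nu T F) = (\<Sum>T\<in>Std n nu. c T * weyl_vec n nu T F)"
      using finite_Std False vanish unfolding few_def by (intro sum.mono_neutral_left) auto
    also have "\<dots> = weyl_vec n nu U F" using expansion by metis
    finally show ?thesis using U_zero by simp
  qed
  then have "\<forall>T\<in>few. c T = 0"
    using finite_Std unfolding few_def by (intro weyl_vec_Std_linear_independent) auto
  then show ?thesis using T unfolding few_def by simp
qed

section \<open>Inserting 1s at the start of the first row\<close>

lemma col_inv_cong: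
  assumes shared: "\<And>i i' j. i \<noteq> i' \<Longrightarrow>
      (in_diag n nu i j \<and> in_diag n nu i' j) \<longleftrightarrow> (in_diag n nu' i j \<and> in_diag n nu' i' j)"
    and eq: "\<And>i i' j. i \<noteq> i' \<Longrightarrow> in_diag n nu i j \<Longrightarrow> in_diag n nu i' j \<Longrightarrow> W i j = W' i j"
  shows "col_inv n nu W = col_inv n nu' W'"
proof -
  have "(in_diag n nu i j \<and> in_diag n nu i' j \<and> i < i' \<and> W i' j < W i j) \<longleftrightarrow>
        (in_diag n nu' i j \<and> in_diag n nu' i' j \<and> i < i' \<and> W' i' j < W' i j)" for i i' j
    using shared[of i i' j] eq[of i i' j] eq[of i' i j] by (cases "i < i'") auto
  then show ?thesis unfolding col_inv_def by simp
qed

lemma col_distinct_cong: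
  assumes shared: "\<And>i i' j. i \<noteq> i' \<Longrightarrow>
      (in_diag n nu i j \<and> in_diag n nu i' j) \<longleftrightarrow> (in_diag n nu' i j \<and> in_diag n nu' i' j)"
    and eq: "\<And>i i' j. i \<noteq> i' \<Longrightarrow> in_diag n nu i j \<Longrightarrow> in_diag n nu i' j \<Longrightarrow> W i j = W' i j"
  shows "col_distinct n nu W \<longleftrightarrow> col_distinct n nu' W'"
  unfolding col_distinct_def using shared eq by metis

text \<open>The shapes mu and mu+ agree outside the first row, and every column
  of height at least two lies among the first mu 2 columns. Entries of the first row
  beyond column mu 2 form columns of their own, so in any word they are those of
  the target filling; the remaining (left) part of a word is shared by both shapes.\<close>
locale first_row_extension =
  fixes n m :: nat and mu :: "nat \<Rightarrow> nat" and F :: "nat \<Rightarrow> nat \<Rightarrow> nat"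
  assumes mu_antimono: "\<And>i j. 1 \<le> i \<Longrightarrow> i \<le> j \<Longrightarrow> mu j \<le> mu i"
    and n_pos: "1 \<le> n"
    and F_tableau: "tableau n (shape_plus m mu) F"
    and F_col_strict: "col_strict n (shape_plus m mu) F"
begin

abbreviation "mu_plus \<equiv> shape_plus m mu"

lemma shape_off_first_row: "nu \<in> {mu, mu_plus} \<Longrightarrow> i \<noteq> 1 \<Longrightarrow> nu i = mu i"
  unfolding shape_plus_def by auto

lemma mu2_le_shape_first_row: "nu \<in> {mu, mu_plus} \<Longrightarrow> mu 2 \<le> nu 1"
  using mu_antimono[of 1 2] unfolding shape_plus_def by auto

lemma in_diag_left_iff:
  "nu \<in> {mu, mu_plus} \<Longrightarrow> j \<le> mu 2 \<Longrightarrow> in_diag n nu i j \<longleftrightarrow> in_diag n mu i j"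
  using shape_off_first_row[of nu] mu2_le_shape_first_row[of nu] mu_antimono[of 1 2]
  unfolding in_diag_def by (cases "i = 1") auto

lemma in_diag_lower_row:
  "nu \<in> {mu, mu_plus} \<Longrightarrow> in_diag n nu i j \<Longrightarrow> 2 \<le> i \<Longrightarrow> j \<le> mu 2"
  using shape_off_first_row[of nu i] mu_antimono[of 2 i] unfolding in_diag_def by auto

lemma in_diag_right_part:
  "nu \<in> {mu, mu_plus} \<Longrightarrow> in_diag n nu i j \<Longrightarrow> mu 2 < j \<Longrightarrow> i = 1"
  using in_diag_lower_row[of nu i j] unfolding in_diag_def by fastforce

lemma in_diag_first_row: "in_diag n nu 1 j \<longleftrightarrow> 1 \<le> j \<and> j \<le> nu 1"
  using n_pos unfolding in_diag_def by auto

lemma shared_column_left: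
  "nu \<in> {mu, mu_plus} \<Longrightarrow> i \<noteq> i' \<Longrightarrow> in_diag n nu i j \<Longrightarrow> in_diag n nu i' j \<Longrightarrow> j \<le> mu 2"
  using in_diag_lower_row[of nu i j] in_diag_lower_row[of nu i' j] unfolding in_diag_def by fastforce

lemma shared_column_iff:
  assumes "nu \<in> {mu, mu_plus}" "nu' \<in> {mu, mu_plus}" "i \<noteq> i'"
  shows "(in_diag n nu i j \<and> in_diag n nu i' j) \<longleftrightarrow> (in_diag n nu' i j \<and> in_diag n nu' i' j)"
  using shared_column_left[OF assms(1,3)] shared_column_left[OF assms(2,3)]
    in_diag_left_iff[OF assms(1)] in_diag_left_iff[OF assms(2)] by blast

definition splice :: "(nat \<Rightarrow> nat) \<Rightarrow> (nat \<Rightarrow> nat \<Rightarrow> nat) \<Rightarrow> (nat \<Rightarrow> nat \<Rightarrow> nat) \<Rightarrow> nat \<Rightarrow> nat \<Rightarrow> nat"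
  where "splice nu Z W = (\<lambda>i j. if in_diag n nu i j then if j \<le> mu 2 then W i j else Z i j else 0)"

lemma splice_left: "in_diag n nu i j \<Longrightarrow> j \<le> mu 2 \<Longrightarrow> splice nu Z W i j = W i j"
  unfolding splice_def by simp

lemma splice_right: "in_diag n nu i j \<Longrightarrow> mu 2 < j \<Longrightarrow> splice nu Z W i j = Z i j"
  unfolding splice_def by simp

lemma splice_splice:
  assumes "nu \<in> {mu, mu_plus}" "nu' \<in> {mu, mu_plus}"
  shows "splice nu Z (splice nu' Z' W) = splice nu Z W"
proof (intro ext)
  fix i j
  have "in_diag n nu i j \<Longrightarrow> j \<le> mu 2 \<Longrightarrow> in_diag n nu' i j"
    using in_diag_left_iff[OF assms(1)] in_diag_left_iff[OF assms(2)] by blast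
  then show "splice nu Z (splice nu' Z' W) i j = splice nu Z W i j" unfolding splice_def by simp
qed

lemma tableau_splice_iff:
  assumes "nu \<in> {mu, mu_plus}" "\<And>i j. in_diag n nu i j \<Longrightarrow> mu 2 < j \<Longrightarrow> Z i j \<in> {1..n}"
  shows "tableau n nu (splice nu Z W) \<longleftrightarrow> (\<forall>i j. in_diag n mu i j \<longrightarrow> j \<le> mu 2 \<longrightarrow> W i j \<in> {1..n})"
proof
  assume "tableau n nu (splice nu Z W)"
  then show "\<forall>i j. in_diag n mu i j \<longrightarrow> j \<le> mu 2 \<longrightarrow> W i j \<in> {1..n}"
    using tableau_in_range in_diag_left_iff[OF assms(1)] splice_left by metis
next
  assume left: "\<forall>i j. in_diag n mu i j \<longrightarrow> j \<le> mu 2 \<longrightarrow> W i j \<in> {1..n}"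
  show "tableau n nu (splice nu Z W)"
    unfolding tableau_def
  proof (intro allI)
    fix i j
    show "if in_diag n nu i j then splice nu Z W i j \<in> {1..n} else splice nu Z W i j = 0"
    proof (cases "in_diag n nu i j")
      case True
      then show ?thesis
        using assms(2) left in_diag_left_iff[OF assms(1)] unfolding splice_def by auto
    qed (simp add: splice_def)
  qed
qed

lemma row_mset_first_splice:
  assumes "nu \<in> {mu, mu_plus}"
  shows "row_mset nu (splice nu Z W) 1
    = mset (map (W 1) [1..<Suc (mu 2)]) + mset (map (Z 1) [Suc (mu 2)..<Suc (nu 1)])"
proof -
  have "splice nu Z W 1 j = W 1 j" if "j \<in> {1..mu 2}" for j
  proof (rule splice_left)
    show "in_diag n nu 1 j"
      using that mu2_le_shape_first_row[OF assms] unfolding in_diag_first_row by auto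
  qed (use that in simp)
  then have "map (splice nu Z W 1) [1..<Suc (mu 2)] = map (W 1) [1..<Suc (mu 2)]"
    by (intro map_cong) (auto simp: atLeastLessThanSuc_atLeastAtMost)
  moreover have "splice nu Z W 1 j = Z 1 j" if "j \<in> {Suc (mu 2)..nu 1}" for j
  proof (rule splice_right)
    show "in_diag n nu 1 j" using that unfolding in_diag_first_row by auto
  qed (use that in simp)
  then have "map (splice nu Z W 1) [Suc (mu 2)..<Suc (nu 1)] = map (Z 1) [Suc (mu 2)..<Suc (nu 1)]"
    by (intro map_cong) (auto simp: atLeastLessThanSuc_atLeastAtMost)
  ultimately show ?thesis
    using row_mset_split[where nu=nu and i=1, OF mu2_le_shape_first_row[OF assms]] by metis
qed

lemma row_mset_lower_splice:
  assumes "nu \<in> {mu, mu_plus}" "nu' \<in> {mu, mu_plus}" "i \<in> {2..n}"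
  shows "row_mset nu (splice nu Z W) i = row_mset nu' W i"
proof -
  have "nu i = mu i" "nu' i = mu i"
    using assms(3) shape_off_first_row[OF assms(1)] shape_off_first_row[OF assms(2)] by auto
  moreover have "mu i \<le> mu 2" using assms(3) mu_antimono by simp
  ultimately have "row_mset nu (splice nu Z W) i = row_mset nu W i"
    using assms(3) by (intro row_mset_cong) (auto simp: splice_def in_diag_def)
  also have "\<dots> = row_mset nu' W i"
    unfolding row_mset_def using \<open>nu i = mu i\<close> \<open>nu' i = mu i\<close> by simp
  finally show ?thesis .
qed

lemma col_set_splice_left:
  assumes "nu \<in> {mu, mu_plus}" "nu' \<in> {mu, mu_plus}" "j \<le> mu 2"
  shows "col_set n nu (splice nu Z W) j = col_set n nu' W j"
proof -
  have "col_set n nu (splice nu Z W) j = col_set n nu W j"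
    using assms(3) by (intro col_set_cong) (simp add: splice_left)
  also have "\<dots> = col_set n nu' W j"
    unfolding col_set_def using in_diag_left_iff[OF assms(1,3)] in_diag_left_iff[OF assms(2,3)] by simp
  finally show ?thesis .
qed

lemma col_set_splice_right: "mu 2 < j \<Longrightarrow> col_set n nu (splice nu Z W) j = col_set n nu Z j"
  by (intro col_set_cong) (simp add: splice_right)

lemma splice_left_shared:
  "nu \<in> {mu, mu_plus} \<Longrightarrow> i \<noteq> i' \<Longrightarrow> in_diag n nu i j \<Longrightarrow> in_diag n nu i' j
    \<Longrightarrow> splice nu Z W i j = W i j"
  using shared_column_left splice_left by blast

lemma col_distinct_splice:
  assumes "nu \<in> {mu, mu_plus}" "nu' \<in> {mu, mu_plus}"
  shows "col_distinct n nu (splice nu Z W) \<longleftrightarrow> col_distinct n nu' W"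
  using shared_column_iff[OF assms] splice_left_shared[OF assms(1)] by (rule col_distinct_cong)

lemma col_inv_splice:
  assumes "nu \<in> {mu, mu_plus}" "nu' \<in> {mu, mu_plus}"
  shows "col_inv n nu (splice nu Z W) = col_inv n nu' W"
  using shared_column_iff[OF assms] splice_left_shared[OF assms(1)] by (rule col_inv_cong)

lemma weyl_word_splice_self:
  assumes "nu \<in> {mu, mu_plus}" "W \<in> weyl_words n nu X Z"
  shows "splice nu Z W = W"
proof (intro ext)
  fix i j
  show "splice nu Z W i j = W i j"
  proof (cases "in_diag n nu i j \<and> mu 2 < j")
    case True
    then have column: "in_diag n nu i' j \<longleftrightarrow> i' = 1" for i'
      using in_diag_right_part[OF assms(1) _ conjunct2[OF True]] by auto
    have "col_set n nu Y j = {Y 1 j}" for Y unfolding col_set_def column by simp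
    moreover have "col_set n nu W j = col_set n nu Z j" using assms(2) unfolding weyl_words_def by blast
    ultimately have "W 1 j = Z 1 j" by simp
    moreover have "i = 1" using True in_diag_right_part[OF assms(1)] by blast
    ultimately show ?thesis using True splice_right by simp
  next
    case False
    have "W i j = 0" if "\<not> in_diag n nu i j"
      using assms(2) tableau_outside that unfolding weyl_words_def by blast
    with False show ?thesis unfolding splice_def by auto
  qed
qed

definition tail :: "nat list" where
  "tail = map (F 1) [Suc (mu 2)..<Suc (mu_plus 1)]"

lemma row_mset_first_weyl_word:
  assumes "W \<in> weyl_words n mu_plus X F"
  shows "row_mset mu_plus W 1 = mset (map (W 1) [1..<Suc (mu 2)]) + mset tail"
  using row_mset_first_splice[of mu_plus F W] weyl_word_splice_self[OF _ assms]
  unfolding tail_def by simp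

text \<open>If the tail of the first row of F holds fewer than m entries 1, no word
  fits: the m inserted 1s and the at least mu 2 original ones cannot all be
  accommodated in the first mu 2 columns and the tail.\<close>
lemma weyl_words_tplus_empty:
  assumes "count (mset tail) 1 < m" "mu 2 \<le> count (row_mset mu X 1) 1"
  shows "weyl_words n mu_plus (tplus m X) F = {}"
proof (rule ccontr)
  assume "weyl_words n mu_plus (tplus m X) F \<noteq> {}"
  then obtain W where W: "W \<in> weyl_words n mu_plus (tplus m X) F" by auto
  have "row_mset mu_plus W 1 = replicate_mset m 1 + row_mset mu X 1"
    using W n_pos row_mset_tplus_first[of m mu X] unfolding weyl_words_def by auto
  then have "m + count (row_mset mu X 1) 1
      = count (mset (map (W 1) [1..<Suc (mu 2)])) 1 + count (mset tail) 1"
    using row_mset_first_weyl_word[OF W] by (metis count_replicate_mset count_union)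
  moreover have "count (mset (map (W 1) [1..<Suc (mu 2)])) 1 \<le> mu 2"
    by (metis count_le_size diff_Suc_1 length_map length_upt size_mset)
  ultimately show False using assms by linarith
qed

end

locale first_row_extension_removable = first_row_extension +
  assumes ones_in_tail: "replicate_mset m 1 \<subseteq># mset tail"
begin

definition tail_reduced :: "nat list" where
  "tail_reduced = sorted_list_of_multiset (mset tail - replicate_mset m 1)"

lemma mset_tail: "mset tail = mset tail_reduced + replicate_mset m 1"
  unfolding tail_reduced_def using ones_in_tail by simp

lemma length_tail_reduced: "length tail_reduced = mu 1 - mu 2"
proof -
  have "length tail = length tail_reduced + m" using arg_cong[OF mset_tail, of size] by simp
  moreover have "length tail = mu 1 + m - mu 2" unfolding tail_def shape_plus_def by simp
  ultimately show ?thesis by simp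
qed

lemma set_tail_reduced: "set tail_reduced \<subseteq> {1..n}"
proof -
  have "set tail_reduced \<subseteq> set tail"
    using mset_tail by (metis mset_subset_eq_add_left set_mset_mono set_mset_mset)
  also have "set tail \<subseteq> {1..n}"
    using tableau_in_range[OF F_tableau, of 1] unfolding tail_def in_diag_first_row by auto
  finally show ?thesis .
qed

text \<open>F_reduced is F with m entries 1 removed from the tail of its
  first row (the remaining tail is re-sorted).\<close>
definition F_reduced :: "nat \<Rightarrow> nat \<Rightarrow> nat" where
  "F_reduced = splice mu (\<lambda>i j. tail_reduced ! (j - Suc (mu 2))) F"

lemma map_F_reduced_tail: "map (F_reduced 1) [Suc (mu 2)..<Suc (mu 1)] = tail_reduced"
proof (rule map_upt_eqI)
  show "length tail_reduced = Suc (mu 1) - Suc (mu 2)" using length_tail_reduced by simp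
  fix k assume "k < length tail_reduced"
  then have "in_diag n mu 1 (Suc (mu 2) + k)" using length_tail_reduced in_diag_first_row by auto
  then show "tail_reduced ! k = F_reduced 1 (Suc (mu 2) + k)"
    unfolding F_reduced_def by (simp add: splice_right)
qed

lemma F_reduced_tableau: "tableau n mu F_reduced"
  unfolding F_reduced_def
proof (subst tableau_splice_iff)
  show "\<forall>i j. in_diag n mu i j \<longrightarrow> j \<le> mu 2 \<longrightarrow> F i j \<in> {1..n}"
    using tableau_in_range[OF F_tableau] in_diag_left_iff[of mu_plus] by blast
  fix i j assume "in_diag n mu i j" "mu 2 < j"
  then have "j - Suc (mu 2) < length tail_reduced"
    using in_diag_right_part[of mu i j] length_tail_reduced unfolding in_diag_def by auto
  then show "tail_reduced ! (j - Suc (mu 2)) \<in> {1..n}" using set_tail_reduced nth_mem by blast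
qed simp

lemma F_reduced_col_strict: "col_strict n mu F_reduced"
  unfolding col_strict_def
proof (intro allI impI)
  fix i i' j assume "in_diag n mu i j \<and> in_diag n mu i' j \<and> i < i'"
  moreover then have "j \<le> mu 2" using shared_column_left[of mu i i' j] by simp
  ultimately show "F_reduced i j < F_reduced i' j"
    using F_col_strict in_diag_left_iff[of mu_plus j] unfolding col_strict_def F_reduced_def
    by (simp add: splice_left)
qed

lemma row_condition_iff:
  assumes "i \<in> {1..n}"
  shows "row_mset mu (splice mu F_reduced W) i = row_mset mu X i
    \<longleftrightarrow> row_mset mu_plus (splice mu_plus F W) i = row_mset mu_plus (tplus m X) i"
proof (cases "i = 1")
  case True
  have "row_mset mu (splice mu F_reduced W) 1 = mset (map (W 1) [1..<Suc (mu 2)]) + mset tail_reduced"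
    using row_mset_first_splice[of mu F_reduced W] map_F_reduced_tail by (simp del: mset_map)
  moreover have "row_mset mu_plus (splice mu_plus F W) 1
      = mset (map (W 1) [1..<Suc (mu 2)]) + mset tail_reduced + replicate_mset m 1"
    using row_mset_first_splice[of mu_plus F W] mset_tail unfolding tail_def
    by (simp add: add.assoc del: mset_map)
  ultimately show ?thesis using True row_mset_tplus_first[of m mu X] by (simp add: add.commute)
next
  case False
  then have "i \<in> {2..n}" using assms by auto
  then show ?thesis
    using row_mset_lower_splice[of mu mu] row_mset_lower_splice[of mu_plus mu] row_mset_tplus_other[OF False]
    by simp
qed

lemma col_condition_iff:
  "col_set n mu (splice mu F_reduced W) j = col_set n mu F_reduced j
    \<longleftrightarrow> col_set n mu_plus (splice mu_plus F W) j = col_set n mu_plus F j"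
proof (cases "j \<le> mu 2")
  case True
  then show ?thesis
    using col_set_splice_left[of mu mu j] col_set_splice_left[of mu_plus mu j]
      col_set_splice_left[of mu mu_plus j] unfolding F_reduced_def by simp
qed (simp add: col_set_splice_right)

lemma splice_weyl_words_iff:
  "splice mu F_reduced W \<in> weyl_words n mu X F_reduced
    \<longleftrightarrow> splice mu_plus F W \<in> weyl_words n mu_plus (tplus m X) F"
proof -
  have "tableau n mu (splice mu F_reduced W) \<longleftrightarrow> tableau n mu_plus (splice mu_plus F W)"
    using tableau_splice_iff[of mu F_reduced] tableau_splice_iff[of mu_plus F]
      tableau_in_range[OF F_reduced_tableau] tableau_in_range[OF F_tableau] by simp
  moreover have "col_distinct n mu (splice mu F_reduced W) \<longleftrightarrow> col_distinct n mu_plus (splice mu_plus F W)"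
    using col_distinct_splice[of mu mu] col_distinct_splice[of mu_plus mu] by simp
  ultimately show ?thesis
    unfolding weyl_words_def using row_condition_iff col_condition_iff by auto
qed

lemma bij_betw_weyl_words:
  "bij_betw (splice mu F_reduced) (weyl_words n mu_plus (tplus m X) F) (weyl_words n mu X F_reduced)"
proof (rule bij_betw_byWitness[where f'="splice mu_plus F"])
  show "\<forall>W\<in>weyl_words n mu_plus (tplus m X) F. splice mu_plus F (splice mu F_reduced W) = W"
    using weyl_word_splice_self[of mu_plus] splice_splice[of mu_plus mu] by simp
  show "\<forall>W\<in>weyl_words n mu X F_reduced. splice mu F_reduced (splice mu_plus F W) = W"
    using weyl_word_splice_self[of mu] splice_splice[of mu mu_plus] by simp
  show "splice mu F_reduced ` weyl_words n mu_plus (tplus m X) F \<subseteq> weyl_words n mu X F_reduced"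
  proof clarify
    fix W assume W: "W \<in> weyl_words n mu_plus (tplus m X) F"
    then have "splice mu_plus F (splice mu F_reduced W) \<in> weyl_words n mu_plus (tplus m X) F"
      using weyl_word_splice_self[of mu_plus] splice_splice[of mu_plus mu] by simp
    then have "splice mu F_reduced (splice mu F_reduced W) \<in> weyl_words n mu X F_reduced"
      using splice_weyl_words_iff by blast
    then show "splice mu F_reduced W \<in> weyl_words n mu X F_reduced"
      using splice_splice[of mu mu] by simp
  qed
  show "splice mu_plus F ` weyl_words n mu X F_reduced \<subseteq> weyl_words n mu_plus (tplus m X) F"
  proof clarify
    fix W assume W: "W \<in> weyl_words n mu X F_reduced"
    then have "splice mu F_reduced (splice mu_plus F W) \<in> weyl_words n mu X F_reduced"
      using weyl_word_splice_self[of mu] splice_splice[of mu mu_plus] by simp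
    then have "splice mu_plus F (splice mu_plus F W) \<in> weyl_words n mu_plus (tplus m X) F"
      using splice_weyl_words_iff by blast
    then show "splice mu_plus F W \<in> weyl_words n mu_plus (tplus m X) F"
      using splice_splice[of mu_plus mu_plus] by simp
  qed
qed

lemma weyl_vec_tplus_eq_reduced:
  "weyl_vec n mu_plus (tplus m X) F = weyl_vec n mu X F_reduced"
proof -
  have "(\<Sum>W\<in>weyl_words n mu_plus (tplus m X) F. (- 1) ^ col_inv n mu_plus W)
      = (\<Sum>W\<in>weyl_words n mu_plus (tplus m X) F. (- 1) ^ col_inv n mu (splice mu F_reduced W))"
    using col_inv_splice[of mu mu_plus] by simp
  also have "\<dots> = (\<Sum>W\<in>weyl_words n mu X F_reduced. (- 1) ^ col_inv n mu W)"
    by (rule sum.reindex_bij_betw[OF bij_betw_weyl_words])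
  finally show ?thesis
    unfolding weyl_vec_eq_sum using F_tableau F_col_strict F_reduced_tableau F_reduced_col_strict by simp
qed

end

lemma weyl_vec_no_rows: "weyl_vec 0 nu X F = weyl_vec 0 nu' Y F"
  unfolding weyl_vec_def in_diag_def tableau_def col_strict_def col_distinct_def col_set_def col_inv_def
  by (simp, metis less_irrefl)

lemma weyl_vec_tplus_cases:
  assumes "1 \<le> n" "\<And>i j. 1 \<le> i \<Longrightarrow> i \<le> j \<Longrightarrow> mu j \<le> mu i"
  obtains (reduced) F' where "\<And>X. weyl_vec n (shape_plus m mu) (tplus m X) F = weyl_vec n mu X F'"
  | (vanishing) "\<And>X. mu 2 \<le> count (row_mset mu X 1) 1 \<Longrightarrow> weyl_vec n (shape_plus m mu) (tplus m X) F = 0"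
proof (cases "tableau n (shape_plus m mu) F \<and> col_strict n (shape_plus m mu) F")
  case True
  then interpret first_row_extension n m mu F using assms by unfold_locales auto
  show ?thesis
  proof (cases "replicate_mset m 1 \<subseteq># mset tail")
    case True
    then interpret first_row_extension_removable n m mu F by unfold_locales
    show ?thesis by (rule reduced[OF weyl_vec_tplus_eq_reduced])
  next
    case False
    then have "count (mset tail) 1 < m" by (meson count_le_replicate_mset_subset_eq not_le)
    then show ?thesis using vanishing weyl_words_tplus_empty unfolding weyl_vec_eq_sum by simp
  qed
next
  case False
  show ?thesis by (rule vanishing) (use False in \<open>auto simp: weyl_vec_eq_sum\<close>)
qed

lemma setA_count_ones: "U \<in> setA n lam mu \<Longrightarrow> 1 \<le> n \<Longrightarrow> lam 1 \<le> count (row_mset mu U 1) 1"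
  unfolding setA_def count_row_mset in_diag_def by (auto simp: conj_commute)

lemma setA_no_ones_below_first_row: "U \<in> setA n lam mu \<Longrightarrow> no_ones_below_first_row n mu U"
  unfolding setA_def no_ones_below_first_row_def by fastforce

theorem weyl_vec_tplus_expansion:
  fixes c :: "(nat \<Rightarrow> nat \<Rightarrow> nat) \<Rightarrow> 'a :: comm_ring_1"
  assumes mu: "is_partition n r mu" and U: "U \<in> setA n lam mu" "mu 2 \<le> lam 1"
    and expansion: "weyl_vec n mu U = (\<lambda>F. \<Sum>T\<in>Std n mu. c T * weyl_vec n mu T F)"
  shows "weyl_vec n (shape_plus m mu) (tplus m U)
       = (\<lambda>F. \<Sum>T\<in>Std n mu. c T * weyl_vec n (shape_plus m mu) (tplus m T) F)"
proof
  fix F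
  show "weyl_vec n (shape_plus m mu) (tplus m U) F
      = (\<Sum>T\<in>Std n mu. c T * weyl_vec n (shape_plus m mu) (tplus m T) F)"
  proof (cases "n = 0")
    case True
    have "(weyl_vec n (shape_plus m mu) (tplus m X) F :: 'a) = weyl_vec n mu X F" for X
      unfolding True by (rule weyl_vec_no_rows)
    then show ?thesis using fun_cong[OF expansion, of F] by simp
  next
    case False
    then have n: "1 \<le> n" by simp
    note mu_antimono = is_partition_antimono[OF mu]
    have U_ones: "mu 2 \<le> count (row_mset mu U 1) 1" using setA_count_ones[OF U(1) n] U(2) by simp
    have few_ones: "c T = 0" if "T \<in> Std n mu" "count (row_mset mu T 1) 1 < mu 2" for T
      using n mu_antimono U_ones setA_no_ones_below_first_row[OF U(1)] expansion that
      by (rule Std_coeff_eq_zero_if_few_ones) simp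
    from n mu_antimono show ?thesis
    proof (rule weyl_vec_tplus_cases[where 'a='a and m=m and F=F])
      fix F' assume "\<And>X. (weyl_vec n (shape_plus m mu) (tplus m X) F :: 'a) = weyl_vec n mu X F'"
      then show ?thesis using fun_cong[OF expansion, of F'] by simp
    next
      assume vanishing: "\<And>X. mu 2 \<le> count (row_mset mu X 1) 1 \<Longrightarrow>
        (weyl_vec n (shape_plus m mu) (tplus m X) F :: 'a) = 0"
      have "c T * weyl_vec n (shape_plus m mu) (tplus m T) F = 0" if "T \<in> Std n mu" for T
        using vanishing[of T] few_ones[OF that] by (cases "mu 2 \<le> count (row_mset mu T 1) 1") auto
      then show ?thesis using vanishing[OF U_ones] by simp
    qed
  qed
qed

theorem lemma4p4:
  fixes lam mu :: "nat \<Rightarrow> nat" and n r p k d :: nat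
    and U :: "nat \<Rightarrow> nat \<Rightarrow> nat" and c :: "(nat \<Rightarrow> nat \<Rightarrow> nat) \<Rightarrow> 'a::field"
  assumes "infinite (UNIV :: 'a set)" and "CHAR('a) = p" and "p > 0"
    and "is_partition n r lam" and "is_partition n r mu" and "mu 2 \<le> lam 1"
    and "k > 0" and "d > 0"
    and "U \<in> setA n lam mu"
    and "(weyl_vec n mu U :: _ \<Rightarrow> 'a) = (\<lambda>F. \<Sum>T\<in>Std n mu. c T * weyl_vec n mu T F)"
  shows "(weyl_vec n (shape_plus (k * p ^ d) mu) (tplus (k * p ^ d) U) :: _ \<Rightarrow> 'a)
       = (\<lambda>F. \<Sum>T\<in>Std n mu. c T * weyl_vec n (shape_plus (k * p ^ d) mu) (tplus (k * p ^ d) T) F)"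
  using assms(5,9,6,10) by (rule weyl_vec_tplus_expansion)

end
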